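(* Let $(\Gamma,\rho)$ be a weakly connected voltage graph with finite voltage group $G$, with local groups $\{G_i\}$ and directed local groups $\{G_i^*\}$. Then: (1) If $\Gamma$ is strongly connected, then $G_i^*=G_i$ for every vertex $v_i$. (2) If vertices $v_i,v_j$ are mutually reachable, then for any walk $w_{ij}$ from $v_i$ to $v_j$, $G_j^*=f(w_{ij})^{-1}\cdot G_i^*\cdot f(w_{ij})$.
   Context: $\Gamma=(V,E)$ simple digraph, $e_{ij}$ the edge $v_i\to v_j$, $\rho:E\to G$. Semi-walk $w=v_{i_1}a_1\dots a_{n-1}v_{i_n}$ with each $a_j\in\{e_{i_ji_{j+1}},e_{i_{j+1}i_j}\}$; walk if all $a_j=e_{i_ji_{j+1}}$; closed if $v_{i_1}=v_{i_n}$; path: walk with distinct vertices. Weakly connected: any two vertices joined by a semi-walk; strongly connected: every ordered pair of distinct vertices joined by a path; $v_i,v_j$ mutually reachable: there is a path from $v_i$ to $v_j$ and one from $v_j$ to $v_i$. Net voltage $f(w)=\bar\rho(a_1)\cdots\bar\rho(a_{n-1})$ with $\bar\rho(a_j)=\rho(a_j)$ for forward and $\rho(a_j)^{-1}$ for backward edges ($f=\mathbf 1$ on a single vertex). $G_i=\{f(w): w$ closed semi-walk at $v_i\}$, $G_i^*=\{f(w): w$ closed walk at $v_i\}$. *)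

theory Defs
  imports "HOL-Algebra.Group"
begin

text \<open>A semi-walk starting at u is a list of steps (b, v): b = True means the
  step traverses the edge u -> v forwards, b = False means it traverses the edge v -> u
  backwards. Since the digraph is simple, an edge is determined by its endpoints.\<close>

definition simple_digraph :: "'v set \<Rightarrow> ('v \<times> 'v) set \<Rightarrow> bool" where
  "simple_digraph V E \<longleftrightarrow> E \<subseteq> V \<times> V \<and> (\<forall>v. (v, v) \<notin> E)"

fun semiwalk_steps :: "('v \<times> 'v) set \<Rightarrow> 'v \<Rightarrow> (bool \<times> 'v) list \<Rightarrow> bool" where
  "semiwalk_steps E u [] = True"
| "semiwalk_steps E u ((b, v) # s) =
     ((if b then (u, v) \<in> E else (v, u) \<in> E) \<and> semiwalk_steps E v s)"

definition is_semiwalk :: "'v set \<Rightarrow> ('v \<times> 'v) set \<Rightarrow> 'v \<Rightarrow> (bool \<times> 'v) list \<Rightarrow> bool" where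
  "is_semiwalk V E u s \<longleftrightarrow> u \<in> V \<and> semiwalk_steps E u s"

definition is_walk :: "'v set \<Rightarrow> ('v \<times> 'v) set \<Rightarrow> 'v \<Rightarrow> (bool \<times> 'v) list \<Rightarrow> bool" where
  "is_walk V E u s \<longleftrightarrow> is_semiwalk V E u s \<and> (\<forall>st \<in> set s. fst st)"

fun walk_end :: "'v \<Rightarrow> (bool \<times> 'v) list \<Rightarrow> 'v" where
  "walk_end u [] = u"
| "walk_end u ((b, v) # s) = walk_end v s"

definition walk_verts :: "'v \<Rightarrow> (bool \<times> 'v) list \<Rightarrow> 'v list" where
  "walk_verts u s = u # map snd s"

definition is_path :: "'v set \<Rightarrow> ('v \<times> 'v) set \<Rightarrow> 'v \<Rightarrow> (bool \<times> 'v) list \<Rightarrow> bool" where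
  "is_path V E u s \<longleftrightarrow> is_walk V E u s \<and> distinct (walk_verts u s)"

fun net_voltage :: "('g, 'b) monoid_scheme \<Rightarrow> ('v \<times> 'v \<Rightarrow> 'g) \<Rightarrow> 'v \<Rightarrow> (bool \<times> 'v) list \<Rightarrow> 'g" where
  "net_voltage G \<rho> u [] = \<one>\<^bsub>G\<^esub>"
| "net_voltage G \<rho> u ((b, v) # s) =
     (if b then \<rho> (u, v) else inv\<^bsub>G\<^esub> (\<rho> (v, u))) \<otimes>\<^bsub>G\<^esub> net_voltage G \<rho> v s"

definition weakly_connected :: "'v set \<Rightarrow> ('v \<times> 'v) set \<Rightarrow> bool" where
  "weakly_connected V E \<longleftrightarrow>
     (\<forall>u \<in> V. \<forall>v \<in> V. \<exists>s. is_semiwalk V E u s \<and> walk_end u s = v)"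

definition strongly_connected :: "'v set \<Rightarrow> ('v \<times> 'v) set \<Rightarrow> bool" where
  "strongly_connected V E \<longleftrightarrow>
     (\<forall>u \<in> V. \<forall>v \<in> V. u \<noteq> v \<longrightarrow> (\<exists>s. is_path V E u s \<and> walk_end u s = v))"

definition mutually_reachable :: "'v set \<Rightarrow> ('v \<times> 'v) set \<Rightarrow> 'v \<Rightarrow> 'v \<Rightarrow> bool" where
  "mutually_reachable V E u v \<longleftrightarrow>
     (\<exists>s. is_path V E u s \<and> walk_end u s = v) \<and> (\<exists>s. is_path V E v s \<and> walk_end v s = u)"

definition local_group :: "('g, 'b) monoid_scheme \<Rightarrow> 'v set \<Rightarrow> ('v \<times> 'v) set \<Rightarrow> ('v \<times> 'v \<Rightarrow> 'g) \<Rightarrow> 'v \<Rightarrow> 'g set" where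
  "local_group G V E \<rho> u = {net_voltage G \<rho> u s | s. is_semiwalk V E u s \<and> walk_end u s = u}"

definition directed_local_group :: "('g, 'b) monoid_scheme \<Rightarrow> 'v set \<Rightarrow> ('v \<times> 'v) set \<Rightarrow> ('v \<times> 'v \<Rightarrow> 'g) \<Rightarrow> 'v \<Rightarrow> 'g set" where
  "directed_local_group G V E \<rho> u = {net_voltage G \<rho> u s | s. is_walk V E u s \<and> walk_end u s = u}"

end

theory Submission imports Defs begin

text \<open>Closed walks at a vertex are closed under concatenation, so in a finite group their voltages
  form a subgroup \<open>G\<^sub>i\<^sup>*\<close>. Hence the inverse voltage of an edge \<open>v \<rightarrow> x\<close> is realised by a walk
  \<open>x \<rightarrow> v\<close> whenever one exists, and in a strongly connected graph every semi-walk can be replaced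
  by a walk with the same ends and voltage. For mutually reachable \<open>u, v\<close>, walks \<open>s : u \<rightarrow> v\<close> and
  \<open>w : v \<rightarrow> u\<close> give \<open>f(s) f(w) \<in> G\<^sub>u\<^sup>*\<close>, and composing closed walks with \<open>s\<close> and \<open>w\<close>
  transports \<open>G\<^sub>u\<^sup>*\<close> and \<open>G\<^sub>v\<^sup>*\<close> into each other up to conjugation by \<open>f(s)\<close>.\<close>

lemma semiwalk_steps_append:
  "semiwalk_steps E u (s @ t) \<longleftrightarrow> semiwalk_steps E u s \<and> semiwalk_steps E (walk_end u s) t"
  by (induction s arbitrary: u) auto

lemma walk_end_append: "walk_end u (s @ t) = walk_end (walk_end u s) t"
  by (induction s arbitrary: u) auto

lemma walk_end_in_vertices:
  assumes "E \<subseteq> V \<times> V" "u \<in> V" "semiwalk_steps E u s"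
  shows "walk_end u s \<in> V"
  using assms(2,3)
proof (induction s arbitrary: u)
  case (Cons st s)
  then show ?case using assms(1) by (cases st; cases "fst st") auto
qed simp

lemma is_walk_append:
  assumes "E \<subseteq> V \<times> V"
  shows "is_walk V E u (s @ t) \<longleftrightarrow> is_walk V E u s \<and> is_walk V E (walk_end u s) t"
  using walk_end_in_vertices[OF assms, of u s]
  by (auto simp: is_walk_def is_semiwalk_def semiwalk_steps_append)

lemma is_walk_edge_Cons:
  "(u, v) \<in> E \<Longrightarrow> u \<in> V \<Longrightarrow> is_walk V E v s \<Longrightarrow> is_walk V E u ((True, v) # s)"
  by (simp add: is_walk_def is_semiwalk_def)

lemma strongly_connected_walk:
  assumes "strongly_connected V E" "u \<in> V" "v \<in> V"
  shows "\<exists>s. is_walk V E u s \<and> walk_end u s = v"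
proof (cases "u = v")
  case True
  then show ?thesis using assms(2) by (intro exI[of _ "[]"]) (simp add: is_walk_def is_semiwalk_def)
next
  case False
  then show ?thesis using assms unfolding strongly_connected_def is_path_def by blast
qed

lemma (in group) finite_submonoid_is_subgroup:
  assumes "finite H" "H \<subseteq> carrier G" "\<one> \<in> H" "\<And>a b. a \<in> H \<Longrightarrow> b \<in> H \<Longrightarrow> a \<otimes> b \<in> H"
  shows "subgroup H G"
proof (rule subgroupI)
  fix a assume a: "a \<in> H"
  have "(\<otimes>) a ` H = H"
  proof (rule endo_inj_surj)
    show "inj_on ((\<otimes>) a) H"
      using a assms(2) by (intro inj_onI) (metis in_mono Units_eq Units_l_cancel)
  qed (use assms a in auto)
  then obtain x where "x \<in> H" "a \<otimes> x = \<one>"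
    using assms(3) by (metis imageE)
  moreover then have "x = inv a"
    using a assms(2) by (metis in_mono inv_equality l_inv_ex m_assoc l_one r_one)
  ultimately show "inv a \<in> H" by simp
qed (use assms in auto)

context group
begin

lemma inv_mult_cancel_left: "x \<in> carrier G \<Longrightarrow> y \<in> carrier G \<Longrightarrow> inv x \<otimes> (x \<otimes> y) = y"
  by (simp flip: m_assoc)

lemma mult_inv_cancel_left: "x \<in> carrier G \<Longrightarrow> y \<in> carrier G \<Longrightarrow> x \<otimes> (inv x \<otimes> y) = y"
  by (simp flip: m_assoc)

lemma net_voltage_closed:
  "\<forall>e \<in> E. \<rho> e \<in> carrier G \<Longrightarrow> semiwalk_steps E u s \<Longrightarrow> net_voltage G \<rho> u s \<in> carrier G"
  by (induction s arbitrary: u) auto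

lemma net_voltage_append:
  assumes "\<forall>e \<in> E. \<rho> e \<in> carrier G" "semiwalk_steps E u s" "semiwalk_steps E (walk_end u s) t"
  shows "net_voltage G \<rho> u (s @ t) = net_voltage G \<rho> u s \<otimes> net_voltage G \<rho> (walk_end u s) t"
  using assms(2,3)
  by (induction s arbitrary: u) (auto simp: m_assoc net_voltage_closed[OF assms(1)] assms(1))

lemma net_voltage_walk_closed:
  "\<forall>e \<in> E. \<rho> e \<in> carrier G \<Longrightarrow> is_walk V E u s \<Longrightarrow> net_voltage G \<rho> u s \<in> carrier G"
  by (simp add: is_walk_def is_semiwalk_def net_voltage_closed)

lemma net_voltage_walk_append:
  "\<forall>e \<in> E. \<rho> e \<in> carrier G \<Longrightarrow> E \<subseteq> V \<times> V \<Longrightarrow> is_walk V E u (s @ t) \<Longrightarrow>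
    net_voltage G \<rho> u (s @ t) = net_voltage G \<rho> u s \<otimes> net_voltage G \<rho> (walk_end u s) t"
  by (simp add: is_walk_def is_semiwalk_def semiwalk_steps_append net_voltage_append)

lemma closed_walk_in_directed_local_group:
  "is_walk V E u s \<Longrightarrow> walk_end u s = u \<Longrightarrow> net_voltage G \<rho> u s \<in> directed_local_group G V E \<rho> u"
  unfolding directed_local_group_def by blast

lemma directed_local_group_subgroup:
  assumes fin: "finite (carrier G)" and EV: "E \<subseteq> V \<times> V"
    and \<rho>: "\<forall>e \<in> E. \<rho> e \<in> carrier G" and u: "u \<in> V"
  shows "subgroup (directed_local_group G V E \<rho> u) G"
proof -
  let ?H = "directed_local_group G V E \<rho> u"
  have sub: "?H \<subseteq> carrier G"
    unfolding directed_local_group_def using net_voltage_walk_closed[OF \<rho>] by blast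
  show ?thesis
  proof (rule finite_submonoid_is_subgroup)
    show "finite ?H" using sub fin finite_subset by blast
    show "\<one> \<in> ?H"
      using closed_walk_in_directed_local_group[of V E u "[]"] u
      by (simp add: is_walk_def is_semiwalk_def)
  next
    fix a b assume "a \<in> ?H" "b \<in> ?H"
    then obtain s t where "is_walk V E u s" "walk_end u s = u" "a = net_voltage G \<rho> u s"
      and "is_walk V E u t" "walk_end u t = u" "b = net_voltage G \<rho> u t"
      unfolding directed_local_group_def by blast
    then show "a \<otimes> b \<in> ?H"
      using closed_walk_in_directed_local_group[of V E u "s @ t" \<rho>]
      by (simp add: is_walk_append[OF EV] walk_end_append net_voltage_walk_append[OF \<rho> EV])
  qed (rule sub)
qed

lemma backward_edge_as_walk:
  assumes fin: "finite (carrier G)" and EV: "E \<subseteq> V \<times> V" and \<rho>: "\<forall>e \<in> E. \<rho> e \<in> carrier G"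
    and e: "(v, x) \<in> E" and q: "is_walk V E x q" "walk_end x q = v"
  shows "\<exists>p. is_walk V E x p \<and> walk_end x p = v \<and> net_voltage G \<rho> x p = inv (\<rho> (v, x))"
proof -
  have v: "v \<in> V" using e EV by auto
  interpret H: subgroup "directed_local_group G V E \<rho> v" G
    using directed_local_group_subgroup[OF fin EV \<rho> v] .
  let ?c = "(True, x) # q"
  have "is_walk V E v ?c" "walk_end v ?c = v"
    using is_walk_edge_Cons[OF e v q(1)] q(2) by simp_all
  then have "net_voltage G \<rho> v ?c \<in> directed_local_group G V E \<rho> v"
    by (rule closed_walk_in_directed_local_group)
  then have "inv (\<rho> (v, x) \<otimes> net_voltage G \<rho> x q) \<in> directed_local_group G V E \<rho> v"
    by simp
  then obtain r where r: "is_walk V E v r" "walk_end v r = v"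
    "net_voltage G \<rho> v r = inv (\<rho> (v, x) \<otimes> net_voltage G \<rho> x q)"
    unfolding directed_local_group_def by auto
  have "is_walk V E x (q @ r)" "walk_end x (q @ r) = v"
    using q r by (simp_all add: is_walk_append[OF EV] walk_end_append)
  moreover have "net_voltage G \<rho> x (q @ r) = inv (\<rho> (v, x))"
    using q r e \<rho> net_voltage_walk_closed[OF \<rho> q(1)]
    by (simp add: net_voltage_walk_append[OF \<rho> EV] is_walk_append[OF EV] inv_mult_group
        flip: m_assoc)
  ultimately show ?thesis by blast
qed

lemma semiwalk_as_walk:
  assumes fin: "finite (carrier G)" and EV: "E \<subseteq> V \<times> V" and \<rho>: "\<forall>e \<in> E. \<rho> e \<in> carrier G"
    and reach: "\<And>x y. x \<in> V \<Longrightarrow> y \<in> V \<Longrightarrow> \<exists>q. is_walk V E x q \<and> walk_end x q = y"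
  shows "is_semiwalk V E u s \<Longrightarrow> \<exists>w. is_walk V E u w \<and> walk_end u w = walk_end u s
           \<and> net_voltage G \<rho> u w = net_voltage G \<rho> u s"
proof (induction s arbitrary: u)
  case Nil
  then show ?case by (intro exI[of _ "[]"]) (simp add: is_walk_def)
next
  case (Cons st s)
  obtain b v where st: "st = (b, v)" by fastforce
  have u: "u \<in> V" and s: "is_semiwalk V E v s"
    using Cons.prems st EV by (auto simp: is_semiwalk_def split: if_splits)
  obtain w where w: "is_walk V E v w" "walk_end v w = walk_end v s"
    "net_voltage G \<rho> v w = net_voltage G \<rho> v s"
    using Cons.IH[OF s] by blast
  show ?case
  proof (cases b)
    case True
    then have "(u, v) \<in> E" using Cons.prems st by (simp add: is_semiwalk_def)
    then show ?thesis
      using is_walk_edge_Cons[OF _ u w(1)] w st True by (intro exI[of _ "(True, v) # w"]) simp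
  next
    case False
    then have e: "(v, u) \<in> E" using Cons.prems st by (simp add: is_semiwalk_def)
    obtain q where "is_walk V E u q" "walk_end u q = v"
      using reach u s by (auto simp: is_semiwalk_def)
    then obtain p where p: "is_walk V E u p" "walk_end u p = v"
      "net_voltage G \<rho> u p = inv (\<rho> (v, u))"
      using backward_edge_as_walk[OF fin EV \<rho> e] by blast
    have "is_walk V E u (p @ w)" "walk_end u (p @ w) = walk_end u (st # s)"
      using p w st by (simp_all add: is_walk_append[OF EV] walk_end_append)
    moreover have "net_voltage G \<rho> u (p @ w) = net_voltage G \<rho> u (st # s)"
      using p w st False by (simp add: net_voltage_walk_append[OF \<rho> EV] is_walk_append[OF EV])
    ultimately show ?thesis by blast
  qed
qed

lemma directed_local_group_eq_local_group:
  assumes fin: "finite (carrier G)" and EV: "E \<subseteq> V \<times> V" and \<rho>: "\<forall>e \<in> E. \<rho> e \<in> carrier G"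
    and sc: "strongly_connected V E"
  shows "directed_local_group G V E \<rho> u = local_group G V E \<rho> u"
proof
  show "directed_local_group G V E \<rho> u \<subseteq> local_group G V E \<rho> u"
    unfolding directed_local_group_def local_group_def is_walk_def by blast
next
  show "local_group G V E \<rho> u \<subseteq> directed_local_group G V E \<rho> u"
  proof
    fix g assume "g \<in> local_group G V E \<rho> u"
    then obtain s where "is_semiwalk V E u s" "walk_end u s = u" "g = net_voltage G \<rho> u s"
      unfolding local_group_def by blast
    then obtain w where "is_walk V E u w" "walk_end u w = u" "net_voltage G \<rho> u w = g"
      using semiwalk_as_walk[OF fin EV \<rho> strongly_connected_walk[OF sc]] by metis
    then show "g \<in> directed_local_group G V E \<rho> u"
      using closed_walk_in_directed_local_group by metis
  qed
qed

lemma directed_local_group_conjugate: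
  assumes fin: "finite (carrier G)" and EV: "E \<subseteq> V \<times> V" and \<rho>: "\<forall>e \<in> E. \<rho> e \<in> carrier G"
    and s: "is_walk V E u s" "walk_end u s = v" and w: "is_walk V E v w" "walk_end v w = u"
  shows "directed_local_group G V E \<rho> v =
    (\<lambda>g. inv (net_voltage G \<rho> u s) \<otimes> g \<otimes> net_voltage G \<rho> u s) ` directed_local_group G V E \<rho> u"
    (is "?Hv = (\<lambda>g. inv ?f \<otimes> g \<otimes> ?f) ` ?Hu")
proof -
  let ?g = "net_voltage G \<rho> v w"
  have u: "u \<in> V" using s(1) by (simp add: is_walk_def is_semiwalk_def)
  interpret Hu: subgroup ?Hu G
    using directed_local_group_subgroup[OF fin EV \<rho> u] .
  have fg: "?f \<in> carrier G" "?g \<in> carrier G"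
    using s(1) w(1) by (simp_all add: net_voltage_walk_closed[OF \<rho>])
  have "is_walk V E u (s @ w)" "walk_end u (s @ w) = u"
    using s w by (simp_all add: is_walk_append[OF EV] walk_end_append)
  then have "net_voltage G \<rho> u (s @ w) \<in> ?Hu"
    by (rule closed_walk_in_directed_local_group)
  then have loop: "?f \<otimes> ?g \<in> ?Hu"
    using s w by (simp add: net_voltage_walk_append[OF \<rho> EV] is_walk_append[OF EV])
  show ?thesis
  proof
    show "?Hv \<subseteq> (\<lambda>g. inv ?f \<otimes> g \<otimes> ?f) ` ?Hu"
    proof
      fix d assume "d \<in> ?Hv"
      then obtain t where t: "is_walk V E v t" "walk_end v t = v" "d = net_voltage G \<rho> v t"
        unfolding directed_local_group_def by blast
      have d: "d \<in> carrier G" using t by (simp add: net_voltage_walk_closed[OF \<rho>])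
      have "is_walk V E u (s @ t @ w)" "walk_end u (s @ t @ w) = u"
        using s t w by (simp_all add: is_walk_append[OF EV] walk_end_append)
      then have "net_voltage G \<rho> u (s @ t @ w) \<in> ?Hu"
        by (rule closed_walk_in_directed_local_group)
      then have "?f \<otimes> d \<otimes> ?g \<in> ?Hu"
        using s t w d fg
        by (simp add: net_voltage_walk_append[OF \<rho> EV] is_walk_append[OF EV] walk_end_append m_assoc)
      then have "(?f \<otimes> d \<otimes> ?g) \<otimes> inv (?f \<otimes> ?g) \<in> ?Hu"
        using loop by simp
      moreover have "d = inv ?f \<otimes> ((?f \<otimes> d \<otimes> ?g) \<otimes> inv (?f \<otimes> ?g)) \<otimes> ?f"
        using d fg by (simp add: m_assoc inv_mult_group inv_mult_cancel_left mult_inv_cancel_left)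
      ultimately show "d \<in> (\<lambda>g. inv ?f \<otimes> g \<otimes> ?f) ` ?Hu" by blast
    qed
  next
    show "(\<lambda>g. inv ?f \<otimes> g \<otimes> ?f) ` ?Hu \<subseteq> ?Hv"
    proof
      fix x assume "x \<in> (\<lambda>g. inv ?f \<otimes> g \<otimes> ?f) ` ?Hu"
      then obtain h where h: "h \<in> ?Hu" "x = inv ?f \<otimes> h \<otimes> ?f" by blast
      have "inv (?f \<otimes> ?g) \<otimes> h \<in> ?Hu"
        using h(1) loop by simp
      then obtain c where c: "is_walk V E u c" "walk_end u c = u"
        "net_voltage G \<rho> u c = inv (?f \<otimes> ?g) \<otimes> h"
        unfolding directed_local_group_def by auto
      have "is_walk V E v (w @ c @ s)" "walk_end v (w @ c @ s) = v"
        using s w c by (simp_all add: is_walk_append[OF EV] walk_end_append)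
      moreover have "net_voltage G \<rho> v (w @ c @ s) = x"
        using s w c h fg Hu.subset
        by (simp add: net_voltage_walk_append[OF \<rho> EV] is_walk_append[OF EV] walk_end_append
            m_assoc inv_mult_group flip: m_assoc)
      ultimately show "x \<in> ?Hv"
        using closed_walk_in_directed_local_group by metis
    qed
  qed
qed

end

theorem corollary2:
  fixes G :: "('g, 'b) monoid_scheme" and V :: "'v set" and E :: "('v \<times> 'v) set"
    and \<rho> :: "'v \<times> 'v \<Rightarrow> 'g"
  assumes "group G" and "finite (carrier G)"
    and "simple_digraph V E"
    and "\<forall>e \<in> E. \<rho> e \<in> carrier G"
    and "weakly_connected V E"
  shows "(strongly_connected V E \<longrightarrow>
            (\<forall>u \<in> V. directed_local_group G V E \<rho> u = local_group G V E \<rho> u))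
       \<and> (\<forall>u \<in> V. \<forall>v \<in> V. mutually_reachable V E u v \<longrightarrow>
            (\<forall>s. is_walk V E u s \<and> walk_end u s = v \<longrightarrow>
               directed_local_group G V E \<rho> v =
                 (\<lambda>g. inv\<^bsub>G\<^esub> (net_voltage G \<rho> u s) \<otimes>\<^bsub>G\<^esub> g \<otimes>\<^bsub>G\<^esub> net_voltage G \<rho> u s)
                   ` directed_local_group G V E \<rho> u))"
proof -
  have EV: "E \<subseteq> V \<times> V" using assms(3) by (simp add: simple_digraph_def)
  note local_groups = group.directed_local_group_eq_local_group[OF assms(1,2) EV assms(4)]
  have conjugate: "directed_local_group G V E \<rho> v =
      (\<lambda>g. inv\<^bsub>G\<^esub> (net_voltage G \<rho> u s) \<otimes>\<^bsub>G\<^esub> g \<otimes>\<^bsub>G\<^esub> net_voltage G \<rho> u s)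
        ` directed_local_group G V E \<rho> u"
    if mr: "mutually_reachable V E u v" and s: "is_walk V E u s" "walk_end u s = v" for u v s
  proof -
    obtain w where "is_walk V E v w" "walk_end v w = u"
      using mr unfolding mutually_reachable_def is_path_def by blast
    then show ?thesis
      using group.directed_local_group_conjugate[OF assms(1,2) EV assms(4) s] by blast
  qed
  show ?thesis using local_groups conjugate by blast
qed

end
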